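(* Let $n\ge1$. There exists an involution $\phi$ of $B_n$ such that for every $\sigma\in B_n$, \[ \mathrm{maj}_B(\sigma)=\mathrm{rmaj}_{B_n}(\phi(\sigma))\quad\text{and}\quad \mathrm{Neg}(\sigma^{-1})=\mathrm{Neg}(\phi(\sigma)^{-1}). \]
   Context: $[a]=\{1,\dots,a\}$. $B_n$ is the group of bijections $\sigma$ of $\{\pm1,\dots,\pm n\}$ with $\sigma(-i)=-\sigma(i)$, written in window notation $[\sigma(1),\dots,\sigma(n)]$, with product $(\sigma\tau)(i)=\sigma(\tau(i))$. The Coxeter generators are $s_0=[-1,2,\dots,n]$ and $s_i=$ the transposition of $i$ and $i+1$ ($1\le i\le n-1$); $\ell_B$ is the length with respect to them. $\mathrm{Neg}(\sigma)=\{i\in[n]:\sigma(i)<0\}$. $\mathrm{Des}_S(\sigma)=\{1\le i\le n-1:\ell_B(\sigma s_i)<\ell_B(\sigma)\}$, $\mathrm{maj}_B(\sigma)=\sum_{i\in\mathrm{Des}_S(\sigma)}i$, and $\mathrm{rmaj}_{B_n}(\sigma)=\sum_{i\in\mathrm{Des}_S(\sigma)}(n-i)$. *)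

theory Defs
  imports Main
begin

definition signed_set :: "nat \<Rightarrow> int set" where
  "signed_set n = {i. 1 \<le> \<bar>i\<bar> \<and> \<bar>i\<bar> \<le> int n}"

definition Bn :: "nat \<Rightarrow> (int \<Rightarrow> int) set" where
  "Bn n = {\<sigma>. bij_betw \<sigma> (signed_set n) (signed_set n)
              \<and> (\<forall>i. \<sigma> (-i) = - \<sigma> i)
              \<and> (\<forall>i. i \<notin> signed_set n \<longrightarrow> \<sigma> i = i)}"

definition gen_s0 :: "int \<Rightarrow> int" where
  "gen_s0 = (\<lambda>x. if x = 1 then -1 else if x = -1 then 1 else x)"

definition gen_s :: "int \<Rightarrow> int \<Rightarrow> int" where
  "gen_s i = (\<lambda>x. if x = i then i + 1 else if x = i + 1 then i
                 else if x = -i then -(i + 1) else if x = -(i + 1) then -i else x)"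

definition gensB :: "nat \<Rightarrow> (int \<Rightarrow> int) set" where
  "gensB n = insert gen_s0 {gen_s (int i) | i. 1 \<le> i \<and> i \<le> n - 1}"

definition lenB :: "nat \<Rightarrow> (int \<Rightarrow> int) \<Rightarrow> nat" where
  "lenB n \<sigma> = (LEAST k. \<exists>ws. set ws \<subseteq> gensB n \<and> length ws = k \<and> foldr (\<circ>) ws id = \<sigma>)"

definition DesS :: "nat \<Rightarrow> (int \<Rightarrow> int) \<Rightarrow> nat set" where
  "DesS n \<sigma> = {i. 1 \<le> i \<and> i \<le> n - 1 \<and> lenB n (\<sigma> \<circ> gen_s (int i)) < lenB n \<sigma>}"

definition majB :: "nat \<Rightarrow> (int \<Rightarrow> int) \<Rightarrow> nat" where
  "majB n \<sigma> = (\<Sum>i\<in>DesS n \<sigma>. i)"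

definition rmajB :: "nat \<Rightarrow> (int \<Rightarrow> int) \<Rightarrow> nat" where
  "rmajB n \<sigma> = (\<Sum>i\<in>DesS n \<sigma>. n - i)"

definition Neg :: "nat \<Rightarrow> (int \<Rightarrow> int) \<Rightarrow> nat set" where
  "Neg n \<sigma> = {i. 1 \<le> i \<and> i \<le> n \<and> \<sigma> (int i) < 0}"

end

theory Submission
  imports Defs "HOL-Combinatorics.Permutations"
begin

(* Let V = \<sigma>({1..n}). As \<sigma> is a signed permutation, V contains exactly one of k, -k for
   every k, and Neg(\<sigma>^-1) = {k. -k \<in> V}. Define \<phi>(\<sigma>) by reading the window of \<sigma>
   backwards and then relabelling its values by the order-reversing bijection of V (extended
   oddly to -V). Then \<phi>(\<sigma>) has the same set V, so Neg(\<sigma>^-1) is unchanged, and \<phi> is an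
   involution.
   Descents are read off the length formula 2 l_B(\<sigma>) = inv(\<sigma>) + #{i \<in> [n]. \<sigma>(i) < 0},
   where inv counts the inversions of \<sigma> as a permutation of {+-1,...,+-n}: right multiplication
   by a generator changes the right-hand side by exactly 2, and every \<sigma> \<noteq> id has a generator
   lowering it. Hence i \<in> Des_S(\<sigma>) iff \<sigma>(i) > \<sigma>(i+1). Reversal sends the positions i, i+1
   to n+1-i, n-i and the relabelling reverses the order of the values, so
   Des_S(\<phi>(\<sigma>)) = {n - i. i \<in> Des_S(\<sigma>)}, which turns maj_B into rmaj. *)

section \<open>Signed permutations\<close>

lemma finite_signed_set: "finite (signed_set n)"
proof -
  have "signed_set n \<subseteq> {- int n..int n}" by (auto simp: signed_set_def)
  then show ?thesis by (rule finite_subset) simp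
qed

lemma uminus_in_signed_set_iff [simp]: "- x \<in> signed_set n \<longleftrightarrow> x \<in> signed_set n"
  by (simp add: signed_set_def)

lemma Bn_uminus: "\<sigma> \<in> Bn n \<Longrightarrow> \<sigma> (- i) = - \<sigma> i"
  by (simp add: Bn_def)

lemma Bn_permutes: "\<sigma> \<in> Bn n \<Longrightarrow> \<sigma> permutes signed_set n"
  unfolding Bn_def by (auto intro: bij_imp_permutes)

lemma Bn_in_signed_set_iff: "\<sigma> \<in> Bn n \<Longrightarrow> \<sigma> x \<in> signed_set n \<longleftrightarrow> x \<in> signed_set n"
  by (rule permutes_in_image[OF Bn_permutes])

lemma Bn_eq_iff: "\<sigma> \<in> Bn n \<Longrightarrow> \<sigma> x = \<sigma> y \<longleftrightarrow> x = y"
  by (meson Bn_permutes permutes_inj injD)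

lemma Bn_comp: "\<sigma> \<in> Bn n \<Longrightarrow> \<tau> \<in> Bn n \<Longrightarrow> \<sigma> \<circ> \<tau> \<in> Bn n"
  unfolding Bn_def using bij_betw_trans by fastforce

lemma Bn_if_involution:
  assumes "\<And>x. x \<in> signed_set n \<Longrightarrow> \<tau> x \<in> signed_set n \<and> \<tau> (\<tau> x) = x"
    and "\<And>i. \<tau> (- i) = - \<tau> i" and "\<And>i. i \<notin> signed_set n \<Longrightarrow> \<tau> i = i"
  shows "\<tau> \<in> Bn n"
  unfolding Bn_def using assms by (auto intro!: bij_betw_byWitness[where f' = \<tau>])

lemma id_Bn: "id \<in> Bn n"
  by (rule Bn_if_involution) auto

lemma gen_s0_Bn: "1 \<le> n \<Longrightarrow> gen_s0 \<in> Bn n"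
  by (rule Bn_if_involution) (auto simp: gen_s0_def signed_set_def)

lemma gen_s_Bn: "1 \<le> k \<Longrightarrow> k + 1 \<le> int n \<Longrightarrow> gen_s k \<in> Bn n"
  by (rule Bn_if_involution) (auto simp: gen_s_def signed_set_def)

lemma gen_s0_gen_s0 [simp]: "gen_s0 (gen_s0 x) = x"
  by (simp add: gen_s0_def)

lemma gen_s_gen_s [simp]: "1 \<le> k \<Longrightarrow> gen_s k (gen_s k x) = x"
  by (auto simp: gen_s_def)

lemma gensB_cases:
  assumes "g \<in> gensB n"
  obtains "g = gen_s0" | k where "g = gen_s k" "1 \<le> k" "k + 1 \<le> int n"
  using assms unfolding gensB_def by force

lemma gensB_subset_Bn: "1 \<le> n \<Longrightarrow> gensB n \<subseteq> Bn n"
  using gen_s0_Bn gen_s_Bn by (auto elim!: gensB_cases)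

lemma gensB_comp_self: "g \<in> gensB n \<Longrightarrow> g \<circ> g = id"
  by (erule gensB_cases) (auto simp: fun_eq_iff)

lemma foldr_comp_snoc: "foldr (\<circ>) (ws @ [w]) id = foldr (\<circ>) ws id \<circ> w"
  by (induction ws) auto

lemma foldr_comp_in_Bn: "1 \<le> n \<Longrightarrow> set ws \<subseteq> gensB n \<Longrightarrow> foldr (\<circ>) ws id \<in> Bn n"
  by (induction ws) (use gensB_subset_Bn in \<open>auto intro: id_Bn Bn_comp\<close>)

section \<open>The Coxeter length\<close>

definition inv_count :: "nat \<Rightarrow> (int \<Rightarrow> int) \<Rightarrow> int" where
  "inv_count n \<tau> = (\<Sum>(a, b)\<in>signed_set n \<times> signed_set n. if a < b \<and> \<tau> b < \<tau> a then 1 else 0)"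

definition neg_count :: "nat \<Rightarrow> (int \<Rightarrow> int) \<Rightarrow> int" where
  "neg_count n \<tau> = (\<Sum>a\<in>{1..int n}. if \<tau> a < 0 then 1 else 0)"

definition length_stat :: "nat \<Rightarrow> (int \<Rightarrow> int) \<Rightarrow> int" where
  "length_stat n \<tau> = inv_count n \<tau> + neg_count n \<tau>"

lemma length_stat_id: "length_stat n id = 0"
  unfolding length_stat_def inv_count_def neg_count_def by (auto intro!: sum.neutral)

lemma length_stat_nonneg: "0 \<le> length_stat n \<tau>"
  unfolding length_stat_def inv_count_def neg_count_def
  by (intro add_nonneg_nonneg sum_nonneg) auto

lemma sum_diff_eq_sum_diff_subset:
  fixes f g :: "'a \<Rightarrow> 'b::ab_group_add"
  assumes "finite A" "E \<subseteq> A" "\<And>x. x \<in> A - E \<Longrightarrow> f x = g x"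
  shows "sum f A - sum g A = sum f E - sum g E"
proof -
  have "sum f A = sum f E + sum f (A - E)" "sum g A = sum g E + sum g (A - E)"
    using assms(1,2) by (metis add.commute sum.subset_diff)+
  moreover have "sum f (A - E) = sum g (A - E)" using assms(3) by (rule sum.cong[OF refl])
  ultimately show ?thesis by simp
qed

lemma inv_count_comp_involution:
  assumes p: "\<And>x. x \<in> signed_set n \<Longrightarrow> p x \<in> signed_set n \<and> p (p x) = x"
    and E: "E \<subseteq> signed_set n \<times> signed_set n"
    and order: "\<And>a b. a \<in> signed_set n \<Longrightarrow> b \<in> signed_set n \<Longrightarrow> (a, b) \<notin> E \<Longrightarrow> p a < p b \<longleftrightarrow> a < b"
  shows "inv_count n (\<tau> \<circ> p) - inv_count n \<tau>
    = (\<Sum>(a, b)\<in>E. if p a < p b \<and> \<tau> b < \<tau> a then 1 else 0)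
      - (\<Sum>(a, b)\<in>E. if a < b \<and> \<tau> b < \<tau> a then 1 else 0)"
proof -
  let ?T = "signed_set n \<times> signed_set n"
  have "inv_count n (\<tau> \<circ> p) = (\<Sum>(a, b)\<in>?T. if p a < p b \<and> \<tau> b < \<tau> a then 1 else 0)"
    unfolding inv_count_def
    by (rule sum.reindex_bij_witness[of _ "\<lambda>(a, b). (p a, p b)" "\<lambda>(a, b). (p a, p b)"])
       (use p in auto)
  then have "inv_count n (\<tau> \<circ> p) - inv_count n \<tau>
    = (\<Sum>(a, b)\<in>?T. if p a < p b \<and> \<tau> b < \<tau> a then 1 else 0)
      - (\<Sum>(a, b)\<in>?T. if a < b \<and> \<tau> b < \<tau> a then 1 else 0)"
    by (simp add: inv_count_def)
  also have "\<dots> = (\<Sum>(a, b)\<in>E. if p a < p b \<and> \<tau> b < \<tau> a then 1 else 0)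
      - (\<Sum>(a, b)\<in>E. if a < b \<and> \<tau> b < \<tau> a then 1 else 0)"
    by (rule sum_diff_eq_sum_diff_subset) (use finite_signed_set E order in auto)
  finally show ?thesis .
qed

lemma gen_s_less_iff:
  assumes "1 \<le> k" "(a, b) \<notin> {(k, k + 1), (k + 1, k), (- (k + 1), - k), (- k, - (k + 1))}"
  shows "gen_s k a < gen_s k b \<longleftrightarrow> a < b"
proof -
  have shift: "gen_s k x = x + (if x = k \<or> x = - (k + 1) then 1 else if x = k + 1 \<or> x = - k then -1 else 0)" for x
    using assms(1) unfolding gen_s_def by auto
  show ?thesis using assms unfolding shift by auto
qed

lemma gen_s0_less_iff:
  assumes "a \<noteq> 0" "b \<noteq> 0" "(a, b) \<notin> {(- 1, 1), (1, - 1)}"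
  shows "gen_s0 a < gen_s0 b \<longleftrightarrow> a < b"
  using assms unfolding gen_s0_def by auto

lemma length_stat_comp_gen_s:
  assumes "\<sigma> \<in> Bn n" "1 \<le> k" "k + 1 \<le> int n"
  shows "length_stat n (\<sigma> \<circ> gen_s k) = length_stat n \<sigma> + (if \<sigma> k < \<sigma> (k + 1) then 2 else -2)"
proof -
  let ?E = "{(k, k + 1), (k + 1, k), (- (k + 1), - k), (- k, - (k + 1))}"
  have "inv_count n (\<sigma> \<circ> gen_s k) - inv_count n \<sigma>
    = (\<Sum>(a, b)\<in>?E. if gen_s k a < gen_s k b \<and> \<sigma> b < \<sigma> a then 1 else 0)
      - (\<Sum>(a, b)\<in>?E. if a < b \<and> \<sigma> b < \<sigma> a then 1 else 0)"
  proof (rule inv_count_comp_involution)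
    show "gen_s k x \<in> signed_set n \<and> gen_s k (gen_s k x) = x" if "x \<in> signed_set n" for x
      using Bn_in_signed_set_iff[OF gen_s_Bn[OF assms(2,3)]] assms(2) that by simp
  qed (use assms(2,3) gen_s_less_iff in \<open>auto simp: signed_set_def\<close>)
  moreover have "neg_count n (\<sigma> \<circ> gen_s k) = neg_count n \<sigma>"
    unfolding neg_count_def
    by (rule sum.reindex_bij_witness[of _ "gen_s k" "gen_s k"]) (use assms(2,3) in \<open>auto simp: gen_s_def\<close>)
  moreover have "\<sigma> k \<noteq> \<sigma> (k + 1)" using Bn_eq_iff[OF assms(1)] by simp
  ultimately show ?thesis
    using assms(2) Bn_uminus[OF assms(1), of k] Bn_uminus[OF assms(1), of "k + 1"]
    unfolding length_stat_def by (cases "\<sigma> k < \<sigma> (k + 1)") (simp_all add: gen_s_def)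
qed

lemma length_stat_comp_gen_s0:
  assumes "\<sigma> \<in> Bn n" "1 \<le> n"
  shows "length_stat n (\<sigma> \<circ> gen_s0) = length_stat n \<sigma> + (if \<sigma> 1 < 0 then -2 else 2)"
proof -
  have "inv_count n (\<sigma> \<circ> gen_s0) - inv_count n \<sigma>
    = (\<Sum>(a, b)\<in>{(-1, 1), (1, -1)}. if gen_s0 a < gen_s0 b \<and> \<sigma> b < \<sigma> a then 1 else 0)
      - (\<Sum>(a, b)\<in>{(-1, 1), (1, -1)}. if a < b \<and> \<sigma> b < \<sigma> a then 1 else 0)"
  proof (rule inv_count_comp_involution)
    show "gen_s0 x \<in> signed_set n \<and> gen_s0 (gen_s0 x) = x" if "x \<in> signed_set n" for x
      using Bn_in_signed_set_iff[OF gen_s0_Bn[OF assms(2)]] that by simp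
  qed (use assms(2) gen_s0_less_iff in \<open>auto simp: signed_set_def\<close>)
  moreover have "neg_count n (\<sigma> \<circ> gen_s0) - neg_count n \<sigma>
    = (\<Sum>a\<in>{1}. if (\<sigma> \<circ> gen_s0) a < 0 then 1 else 0) - (\<Sum>a\<in>{1}. if \<sigma> a < 0 then 1 else 0)"
    unfolding neg_count_def
    by (rule sum_diff_eq_sum_diff_subset) (use assms(2) in \<open>auto simp: gen_s0_def\<close>)
  moreover have "\<sigma> 1 \<noteq> 0"
    using Bn_in_signed_set_iff[OF assms(1), of 1] assms(2) by (auto simp: signed_set_def)
  ultimately show ?thesis
    using Bn_uminus[OF assms(1), of 1] unfolding length_stat_def
    by (cases "\<sigma> 1 < 0") (simp_all add: gen_s0_def)
qed

lemma length_stat_comp_gensB: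
  assumes "1 \<le> n" "\<sigma> \<in> Bn n" "g \<in> gensB n"
  shows "\<bar>length_stat n (\<sigma> \<circ> g) - length_stat n \<sigma>\<bar> = 2"
  using assms(3)
proof (cases rule: gensB_cases)
  case 1
  then show ?thesis using length_stat_comp_gen_s0[OF assms(2,1)] by simp
next
  case (2 k)
  then show ?thesis using length_stat_comp_gen_s[OF assms(2) 2(2,3)] by simp
qed

lemma length_stat_word_le:
  assumes "1 \<le> n" "set ws \<subseteq> gensB n"
  shows "length_stat n (foldr (\<circ>) ws id) \<le> 2 * int (length ws)"
  using assms(2)
proof (induction ws rule: rev_induct)
  case Nil
  then show ?case using length_stat_id[of n] by (simp add: id_def)
next
  case (snoc w ws)
  have "set ws \<subseteq> gensB n" using snoc.prems by simp
  then have "length_stat n (foldr (\<circ>) ws id) \<le> 2 * int (length ws)" by (rule snoc.IH)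
  moreover have "\<bar>length_stat n (foldr (\<circ>) ws id \<circ> w) - length_stat n (foldr (\<circ>) ws id)\<bar> = 2"
    using snoc.prems by (intro length_stat_comp_gensB foldr_comp_in_Bn assms(1)) auto
  ultimately show ?case unfolding foldr_comp_snoc length_append_singleton of_nat_Suc by arith
qed

lemma int_increasing_fixes_interval:
  fixes f :: "int \<Rightarrow> int"
  assumes incr: "\<And>x. a \<le> x \<Longrightarrow> x < b \<Longrightarrow> f x < f (x + 1)"
    and "a \<le> f a" "f b \<le> b" "a \<le> x" "x \<le> b"
  shows "f x = x"
proof -
  have "f a + (x - a) \<le> f x"
    using \<open>a \<le> x\<close> \<open>x \<le> b\<close>
  proof (induction x rule: int_ge_induct)
    case (step i)
    then show ?case using incr[of i] by simp
  qed simp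
  moreover have "f x + (b - x) \<le> f b"
    using \<open>x \<le> b\<close> \<open>a \<le> x\<close>
  proof (induction x rule: int_le_induct)
    case (step i)
    then show ?case using incr[of "i - 1"] by simp
  qed simp
  ultimately show ?thesis using assms(2-) by linarith
qed

lemma Bn_eq_id_if_no_descent:
  assumes "\<sigma> \<in> Bn n" "1 \<le> n" "0 < \<sigma> 1"
    and asc: "\<And>k. 1 \<le> k \<Longrightarrow> k < int n \<Longrightarrow> \<sigma> k < \<sigma> (k + 1)"
  shows "\<sigma> = id"
proof
  have pos: "\<sigma> x = x" if "1 \<le> x" "x \<le> int n" for x
  proof (rule int_increasing_fixes_interval[where a = 1 and b = "int n"])
    have "\<sigma> (int n) \<in> signed_set n"
      using Bn_in_signed_set_iff[OF assms(1)] assms(2) by (simp add: signed_set_def)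
    then show "\<sigma> (int n) \<le> int n" by (simp add: signed_set_def abs_le_iff)
  qed (use asc assms(3) that in auto)
  fix x
  show "\<sigma> x = id x"
  proof (cases "x \<in> signed_set n")
    case True
    then have "\<sigma> x = x \<or> \<sigma> (- x) = - x"
      using pos[of x] pos[of "- x"] by (auto simp: signed_set_def abs_if split: if_splits)
    then show ?thesis using Bn_uminus[OF assms(1), of x] by auto
  next
    case False
    then show ?thesis using assms(1) by (simp add: Bn_def)
  qed
qed

lemma exists_gensB_length_stat_decrease:
  assumes "1 \<le> n" "\<sigma> \<in> Bn n" "\<sigma> \<noteq> id"
  shows "\<exists>g\<in>gensB n. length_stat n (\<sigma> \<circ> g) = length_stat n \<sigma> - 2"
proof (cases "\<sigma> 1 < 0")
  case True
  then show ?thesis using length_stat_comp_gen_s0[OF assms(2,1)] by (auto simp: gensB_def)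
next
  case False
  moreover have "\<sigma> 1 \<noteq> 0"
    using Bn_in_signed_set_iff[OF assms(2), of 1] assms(1) by (auto simp: signed_set_def)
  ultimately obtain k where k: "1 \<le> k" "k < int n" "\<not> \<sigma> k < \<sigma> (k + 1)"
    using Bn_eq_id_if_no_descent[OF assms(2,1)] assms(3) by force
  then have "gen_s k \<in> gensB n"
    unfolding gensB_def by (auto intro!: exI[of _ "nat k"])
  then show ?thesis using length_stat_comp_gen_s[OF assms(2), of k] k by auto
qed

lemma exists_reduced_word:
  assumes "1 \<le> n" "\<sigma> \<in> Bn n"
  shows "\<exists>ws. set ws \<subseteq> gensB n \<and> 2 * int (length ws) = length_stat n \<sigma> \<and> foldr (\<circ>) ws id = \<sigma>"
  using assms(2)
proof (induction "nat (length_stat n \<sigma>)" arbitrary: \<sigma> rule: less_induct)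
  case less
  show ?case
  proof (cases "\<sigma> = id")
    case True
    then show ?thesis using length_stat_id by (intro exI[of _ "[]"]) auto
  next
    case False
    then obtain g where g: "g \<in> gensB n" "length_stat n (\<sigma> \<circ> g) = length_stat n \<sigma> - 2"
      using exists_gensB_length_stat_decrease[OF assms(1) less.prems] by blast
    moreover have "\<sigma> \<circ> g \<in> Bn n"
      using g(1) gensB_subset_Bn[OF assms(1)] by (blast intro: Bn_comp less.prems)
    ultimately obtain ws where ws: "set ws \<subseteq> gensB n" "2 * int (length ws) = length_stat n (\<sigma> \<circ> g)"
        "foldr (\<circ>) ws id = \<sigma> \<circ> g"
      using less.hyps length_stat_nonneg[of n "\<sigma> \<circ> g"] by force
    have "foldr (\<circ>) (ws @ [g]) id = \<sigma>"
      by (simp only: foldr_comp_snoc ws(3) comp_assoc gensB_comp_self[OF g(1)] comp_id)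
    then show ?thesis using ws g by (intro exI[of _ "ws @ [g]"]) auto
  qed
qed

lemma lenB_eq_length_stat:
  assumes "1 \<le> n" "\<sigma> \<in> Bn n"
  shows "2 * int (lenB n \<sigma>) = length_stat n \<sigma>"
proof -
  obtain ws where ws: "set ws \<subseteq> gensB n" "2 * int (length ws) = length_stat n \<sigma>"
      "foldr (\<circ>) ws id = \<sigma>"
    using exists_reduced_word[OF assms] by blast
  have "lenB n \<sigma> = length ws"
    unfolding lenB_def
  proof (rule Least_equality)
    show "\<exists>vs. set vs \<subseteq> gensB n \<and> length vs = length ws \<and> foldr (\<circ>) vs id = \<sigma>"
      using ws by blast
  next
    fix k
    assume "\<exists>vs. set vs \<subseteq> gensB n \<and> length vs = k \<and> foldr (\<circ>) vs id = \<sigma>"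
    then show "length ws \<le> k" using length_stat_word_le[OF assms(1)] ws(2) by force
  qed
  then show ?thesis using ws(2) by simp
qed

lemma DesS_eq:
  assumes "1 \<le> n" "\<sigma> \<in> Bn n"
  shows "DesS n \<sigma> = {i. 1 \<le> i \<and> i \<le> n - 1 \<and> \<sigma> (int i + 1) < \<sigma> (int i)}"
proof -
  have "lenB n (\<sigma> \<circ> gen_s (int i)) < lenB n \<sigma> \<longleftrightarrow> \<sigma> (int i + 1) < \<sigma> (int i)"
    if "1 \<le> i" "i \<le> n - 1" for i
  proof -
    have k: "1 \<le> int i" "int i + 1 \<le> int n" using that assms(1) by auto
    have "\<sigma> \<circ> gen_s (int i) \<in> Bn n" using Bn_comp[OF assms(2) gen_s_Bn[OF k]] .
    then have "2 * int (lenB n (\<sigma> \<circ> gen_s (int i)))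
        = 2 * int (lenB n \<sigma>) + (if \<sigma> (int i) < \<sigma> (int i + 1) then 2 else -2)"
      using lenB_eq_length_stat[OF assms(1)] length_stat_comp_gen_s[OF assms(2) k] assms(2) by simp
    moreover have "\<sigma> (int i) \<noteq> \<sigma> (int i + 1)" using Bn_eq_iff[OF assms(2)] by simp
    ultimately show ?thesis by (cases "\<sigma> (int i) < \<sigma> (int i + 1)") auto
  qed
  then show ?thesis unfolding DesS_def by auto
qed

section \<open>Order reversal of a finite linear order\<close>

definition list_index :: "'a list \<Rightarrow> 'a \<Rightarrow> nat" where
  "list_index xs v = (THE i. i < length xs \<and> xs ! i = v)"

definition order_reversal :: "'a::linorder set \<Rightarrow> 'a \<Rightarrow> 'a" where
  "order_reversal V v = (let xs = sorted_list_of_set V in rev xs ! list_index xs v)"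

lemma list_index_correct:
  assumes "distinct xs" "v \<in> set xs"
  shows "list_index xs v < length xs" "xs ! list_index xs v = v"
  using theI'[OF distinct_Ex1[OF assms]] unfolding list_index_def by auto

lemma list_index_nth: "distinct xs \<Longrightarrow> i < length xs \<Longrightarrow> list_index xs (xs ! i) = i"
  unfolding list_index_def by (rule the_equality) (auto simp: nth_eq_iff_index_eq)

context
  fixes V :: "'a::linorder set"
  assumes fin: "finite V"
begin

private abbreviation "xs \<equiv> sorted_list_of_set V"

private lemma order_reversal_nth:
  assumes "v \<in> V"
  shows "list_index xs v < length xs" "xs ! list_index xs v = v"
    "order_reversal V v = xs ! (length xs - Suc (list_index xs v))"
  using list_index_correct[of xs v] assms fin by (auto simp: order_reversal_def Let_def rev_nth)

lemma order_reversal_mem: "v \<in> V \<Longrightarrow> order_reversal V v \<in> V"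
  using order_reversal_nth[of v] fin nth_mem[of "length xs - Suc (list_index xs v)" xs] by simp

lemma order_reversal_involution: "v \<in> V \<Longrightarrow> order_reversal V (order_reversal V v) = v"
  using order_reversal_nth[of v] order_reversal_nth[OF order_reversal_mem, of v]
  by (simp add: list_index_nth Suc_diff_Suc)

lemma order_reversal_less_iff:
  assumes "v \<in> V" "w \<in> V"
  shows "order_reversal V v < order_reversal V w \<longleftrightarrow> w < v"
proof -
  have nth_less_iff: "xs ! i < xs ! j \<longleftrightarrow> i < j" if "i < length xs" "j < length xs" for i j
    using that sorted_wrt_nth_less[OF strict_sorted_list_of_set]
    by (metis linorder_neqE_nat less_asym)
  define i j where "i = list_index xs v" and "j = list_index xs w"
  note v = order_reversal_nth[OF assms(1), folded i_def] and w = order_reversal_nth[OF assms(2), folded j_def]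
  have "order_reversal V v < order_reversal V w \<longleftrightarrow> length xs - Suc i < length xs - Suc j"
    using v w by (simp add: nth_less_iff)
  also have "\<dots> \<longleftrightarrow> j < i" using v(1) w(1) by arith
  also have "\<dots> \<longleftrightarrow> w < v" using v w nth_less_iff[of j i] by simp
  finally show ?thesis .
qed

lemma order_reversal_image: "order_reversal V ` V = V"
proof
  show "order_reversal V ` V \<subseteq> V" using order_reversal_mem by blast
  show "V \<subseteq> order_reversal V ` V"
    using order_reversal_mem order_reversal_involution by (metis imageI subsetI)
qed

end

section \<open>The involution\<close>

definition rev_perm :: "nat \<Rightarrow> int \<Rightarrow> int" where
  "rev_perm n x = (if 1 \<le> x \<and> x \<le> int n then int n + 1 - x
     else if 1 \<le> - x \<and> - x \<le> int n then - (int n + 1 + x) else x)"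

lemma rev_perm_pos: "1 \<le> x \<Longrightarrow> x \<le> int n \<Longrightarrow> rev_perm n x = int n + 1 - x"
  by (simp add: rev_perm_def)

lemma rev_perm_rev_perm [simp]: "rev_perm n (rev_perm n x) = x"
  unfolding rev_perm_def by (cases "1 \<le> x \<and> x \<le> int n"; cases "1 \<le> - x \<and> - x \<le> int n") auto

lemma rev_perm_Bn: "rev_perm n \<in> Bn n"
  by (rule Bn_if_involution) (auto simp: rev_perm_def signed_set_def)

lemma rev_perm_image_pos: "rev_perm n ` {1..int n} = {1..int n}"
proof
  show "rev_perm n ` {1..int n} \<subseteq> {1..int n}" by (auto simp: rev_perm_pos)
  show "{1..int n} \<subseteq> rev_perm n ` {1..int n}"
  proof
    fix x assume "x \<in> {1..int n}"
    then have "x = rev_perm n (int n + 1 - x)" "int n + 1 - x \<in> {1..int n}" by (auto simp: rev_perm_pos)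
    then show "x \<in> rev_perm n ` {1..int n}" by blast
  qed
qed

definition signed_ext :: "int set \<Rightarrow> (int \<Rightarrow> int) \<Rightarrow> int \<Rightarrow> int" where
  "signed_ext V f y = (if y \<in> V then f y else if - y \<in> V then - f (- y) else y)"

lemma signed_ext_signed_ext:
  assumes "\<And>v. v \<in> V \<Longrightarrow> - v \<notin> V"
    and "\<And>v. v \<in> V \<Longrightarrow> f v \<in> V" "\<And>v. v \<in> V \<Longrightarrow> f (f v) = v"
  shows "signed_ext V f (signed_ext V f y) = y"
  using assms by (auto simp: signed_ext_def)

lemma signed_ext_Bn:
  assumes "V \<subseteq> signed_set n" "\<And>y. y \<in> signed_set n \<Longrightarrow> - y \<in> V \<longleftrightarrow> y \<notin> V"
    and "\<And>v. v \<in> V \<Longrightarrow> f v \<in> V" "\<And>v. v \<in> V \<Longrightarrow> f (f v) = v"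
  shows "signed_ext V f \<in> Bn n"
proof (rule Bn_if_involution)
  have disj: "- v \<notin> V" if "v \<in> V" for v using assms(1,2) that by blast
  show "signed_ext V f x \<in> signed_set n \<and> signed_ext V f (signed_ext V f x) = x"
    if "x \<in> signed_set n" for x
    using signed_ext_signed_ext[OF disj assms(3,4)] assms(1,3) that
    by (auto simp: signed_ext_def)
  show "signed_ext V f (- i) = - signed_ext V f i" for i
    using disj by (auto simp: signed_ext_def)
  show "signed_ext V f i = i" if "i \<notin> signed_set n" for i
    using assms(1) that by (auto simp: signed_ext_def)
qed

definition image_pos :: "nat \<Rightarrow> (int \<Rightarrow> int) \<Rightarrow> int set" where
  "image_pos n \<sigma> = \<sigma> ` {1..int n}"

lemma finite_image_pos: "finite (image_pos n \<sigma>)"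
  by (simp add: image_pos_def)

lemma image_pos_subset: "\<sigma> \<in> Bn n \<Longrightarrow> image_pos n \<sigma> \<subseteq> signed_set n"
  unfolding image_pos_def using Bn_in_signed_set_iff by (fastforce simp: signed_set_def)

lemma uminus_in_image_pos_iff:
  assumes "\<sigma> \<in> Bn n" "y \<in> signed_set n"
  shows "- y \<in> image_pos n \<sigma> \<longleftrightarrow> y \<notin> image_pos n \<sigma>"
proof -
  obtain x where x: "x \<in> signed_set n" "y = \<sigma> x"
    using permutes_surj[OF Bn_permutes[OF assms(1)]] Bn_in_signed_set_iff[OF assms(1)] assms(2)
    by (metis surjD)
  have image_pos_iff: "\<sigma> w \<in> image_pos n \<sigma> \<longleftrightarrow> 1 \<le> w \<and> w \<le> int n" for w
    using Bn_eq_iff[OF assms(1)] by (auto simp: image_pos_def)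
  show ?thesis
    using x image_pos_iff[of x] image_pos_iff[of "- x"] Bn_uminus[OF assms(1), of x]
    by (auto simp: signed_set_def)
qed

definition rev_compl :: "nat \<Rightarrow> (int \<Rightarrow> int) \<Rightarrow> int \<Rightarrow> int" where
  "rev_compl n \<sigma> = signed_ext (image_pos n \<sigma>) (order_reversal (image_pos n \<sigma>)) \<circ> \<sigma> \<circ> rev_perm n"

lemma rev_compl_pos:
  assumes "1 \<le> x" "x \<le> int n"
  shows "rev_compl n \<sigma> x = order_reversal (image_pos n \<sigma>) (\<sigma> (int n + 1 - x))"
proof -
  have "\<sigma> (int n + 1 - x) \<in> image_pos n \<sigma>" using assms by (auto simp: image_pos_def)
  then show ?thesis using assms by (simp add: rev_compl_def signed_ext_def rev_perm_pos)
qed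

lemma image_pos_rev_compl:
  assumes "\<sigma> \<in> Bn n"
  shows "image_pos n (rev_compl n \<sigma>) = image_pos n \<sigma>"
proof -
  let ?V = "image_pos n \<sigma>"
  have "image_pos n (rev_compl n \<sigma>) = signed_ext ?V (order_reversal ?V) ` ?V"
    unfolding rev_compl_def image_pos_def image_comp[symmetric] rev_perm_image_pos ..
  also have "\<dots> = order_reversal ?V ` ?V" by (rule image_cong) (auto simp: signed_ext_def)
  also have "\<dots> = ?V" by (rule order_reversal_image[OF finite_image_pos])
  finally show ?thesis .
qed

lemma rev_compl_Bn:
  assumes "\<sigma> \<in> Bn n"
  shows "rev_compl n \<sigma> \<in> Bn n"
  unfolding rev_compl_def
  by (intro Bn_comp signed_ext_Bn rev_perm_Bn assms image_pos_subset uminus_in_image_pos_iff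
            order_reversal_mem order_reversal_involution finite_image_pos)

lemma rev_compl_rev_compl:
  assumes "\<sigma> \<in> Bn n"
  shows "rev_compl n (rev_compl n \<sigma>) = \<sigma>"
proof
  fix x
  let ?V = "image_pos n \<sigma>"
  have disj: "- v \<notin> ?V" if "v \<in> ?V" for v
    using uminus_in_image_pos_iff[OF assms] image_pos_subset[OF assms] that by blast
  show "rev_compl n (rev_compl n \<sigma>) x = \<sigma> x"
    unfolding rev_compl_def[of n "rev_compl n \<sigma>"] image_pos_rev_compl[OF assms]
    using signed_ext_signed_ext[OF disj order_reversal_mem[OF finite_image_pos]
        order_reversal_involution[OF finite_image_pos]]
    by (simp add: rev_compl_def)
qed

lemma rev_compl_descent_iff:
  assumes "\<sigma> \<in> Bn n" "1 \<le> i" "i < n"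
  shows "rev_compl n \<sigma> (int i + 1) < rev_compl n \<sigma> (int i)
    \<longleftrightarrow> \<sigma> (int (n - i) + 1) < \<sigma> (int (n - i))"
proof -
  let ?V = "image_pos n \<sigma>"
  have "rev_compl n \<sigma> (int i + 1) = order_reversal ?V (\<sigma> (int (n - i)))"
    using rev_compl_pos[of "int i + 1" n \<sigma>] assms(2,3) by (simp add: of_nat_diff)
  moreover have "rev_compl n \<sigma> (int i) = order_reversal ?V (\<sigma> (int (n - i) + 1))"
    using rev_compl_pos[of "int i" n \<sigma>] assms(2,3) by (simp add: of_nat_diff algebra_simps)
  moreover have "\<sigma> (int (n - i)) \<in> ?V" "\<sigma> (int (n - i) + 1) \<in> ?V"
    using assms(2,3) by (auto simp: image_pos_def)
  ultimately show ?thesis by (simp add: order_reversal_less_iff[OF finite_image_pos])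
qed

lemma majB_eq_rmajB_rev_compl:
  assumes "1 \<le> n" "\<sigma> \<in> Bn n"
  shows "majB n \<sigma> = rmajB n (rev_compl n \<sigma>)"
proof -
  have bounds: "1 \<le> j \<and> j \<le> n - 1" if "j \<in> DesS n \<tau>" for j \<tau>
    using that by (simp add: DesS_def)
  have DesS_iff: "n - j \<in> DesS n (rev_compl n \<sigma>) \<longleftrightarrow> j \<in> DesS n \<sigma>" if "1 \<le> j" "j \<le> n - 1" for j
    using that rev_compl_descent_iff[OF assms(2), of "n - j"]
    unfolding DesS_eq[OF assms] DesS_eq[OF assms(1) rev_compl_Bn[OF assms(2)]] by auto
  show ?thesis
    unfolding majB_def rmajB_def
  proof (rule sum.reindex_bij_witness[of _ "\<lambda>i. n - i" "\<lambda>i. n - i"])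
    show "n - j \<in> DesS n (rev_compl n \<sigma>)" if "j \<in> DesS n \<sigma>" for j
      using DesS_iff bounds that by blast
    show "n - i \<in> DesS n \<sigma>" if "i \<in> DesS n (rev_compl n \<sigma>)" for i
    proof -
      have "n - (n - i) = i" using bounds[OF that] by arith
      then show ?thesis using DesS_iff[of "n - i"] bounds[OF that] that by auto
    qed
  qed (use bounds in force)+
qed

lemma Neg_inv_eq:
  assumes "\<sigma> \<in> Bn n"
  shows "Neg n (inv \<sigma>) = {k. 1 \<le> k \<and> k \<le> n \<and> - int k \<in> image_pos n \<sigma>}"
proof -
  have "inv \<sigma> (int k) < 0 \<longleftrightarrow> - int k \<in> image_pos n \<sigma>" if "1 \<le> k" "k \<le> n" for k
  proof -
    let ?x = "inv \<sigma> (int k)"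
    have "\<sigma> ?x = int k" using permutes_inverses(1)[OF Bn_permutes[OF assms]] .
    then have x: "?x \<in> signed_set n" "\<sigma> (- ?x) = - int k"
      using Bn_in_signed_set_iff[OF assms, of ?x] Bn_uminus[OF assms, of ?x] that
      by (auto simp: signed_set_def)
    show ?thesis
    proof
      assume "?x < 0"
      then show "- int k \<in> image_pos n \<sigma>"
        using x unfolding image_pos_def by (auto simp: signed_set_def intro!: image_eqI[of _ _ "- ?x"])
    next
      assume "- int k \<in> image_pos n \<sigma>"
      then obtain y where "1 \<le> y" "\<sigma> y = \<sigma> (- ?x)" using x(2) by (auto simp: image_pos_def)
      then show "?x < 0" using Bn_eq_iff[OF assms] by force
    qed
  qed
  then show ?thesis unfolding Neg_def by auto
qed

theorem lemma2p29:
  fixes n :: nat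
  assumes "n \<ge> 1"
  shows "\<exists>\<phi>. (\<forall>\<sigma>\<in>Bn n. \<phi> \<sigma> \<in> Bn n \<and> \<phi> (\<phi> \<sigma>) = \<sigma>)
            \<and> (\<forall>\<sigma>\<in>Bn n. majB n \<sigma> = rmajB n (\<phi> \<sigma>)
                          \<and> Neg n (inv \<sigma>) = Neg n (inv (\<phi> \<sigma>)))"
proof (intro exI[of _ "rev_compl n"] conjI ballI)
  fix \<sigma> assume \<sigma>: "\<sigma> \<in> Bn n"
  show "rev_compl n \<sigma> \<in> Bn n" using rev_compl_Bn[OF \<sigma>] .
  show "rev_compl n (rev_compl n \<sigma>) = \<sigma>" using rev_compl_rev_compl[OF \<sigma>] .
  show "majB n \<sigma> = rmajB n (rev_compl n \<sigma>)" using majB_eq_rmajB_rev_compl[OF assms \<sigma>] .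
  show "Neg n (inv \<sigma>) = Neg n (inv (rev_compl n \<sigma>))"
    unfolding Neg_inv_eq[OF \<sigma>] Neg_inv_eq[OF rev_compl_Bn[OF \<sigma>]] image_pos_rev_compl[OF \<sigma>] ..
qed

end
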